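(* Let $S\subset\mathbb R^2$ be a finite set of $n>4$ points, none of which lies at the center $O$ of SED$(S)$. If $S$ is Pre-regular, then the cyclic order of the points of $S$ around $O$ coincides with the cyclic order of the points of $S$ around the center of the supporting polygon of $S$.
   Context: SED$(S)$ is the smallest closed disk containing $S$, SEC$(S)$ its boundary circle, and $O$ its center. $S$ is \emph{Pre-regular} if there is a regular $n$-gon $P$ (the supporting polygon) such that for every pair of adjacent edges of $P$, one of the two edges contains exactly two points of $S$ (possibly at its endpoints) and the relative interior of the other edge contains no point of $S$. *)

theory Defs
  imports "HOL-Analysis.Analysis"
begin

text \<open>The plane R^2 is identified with the complex numbers.\<close>

definition is_SED :: "complex set \<Rightarrow> complex \<Rightarrow> real \<Rightarrow> bool" where
  "is_SED S c r \<longleftrightarrow> S \<subseteq> cball c r \<and>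
     (\<forall>c' r'. S \<subseteq> cball c' r' \<longrightarrow> r \<le> r')"

definition poly_vertex :: "nat \<Rightarrow> complex \<Rightarrow> real \<Rightarrow> real \<Rightarrow> nat \<Rightarrow> complex" where
  "poly_vertex n C rho phi k = C + of_real rho * cis (phi + 2 * pi * real k / real n)"

definition poly_edge :: "nat \<Rightarrow> complex \<Rightarrow> real \<Rightarrow> real \<Rightarrow> nat \<Rightarrow> complex set" where
  "poly_edge n C rho phi k =
     closed_segment (poly_vertex n C rho phi (k mod n)) (poly_vertex n C rho phi (Suc k mod n))"

definition poly_edge_relint :: "nat \<Rightarrow> complex \<Rightarrow> real \<Rightarrow> real \<Rightarrow> nat \<Rightarrow> complex set" where
  "poly_edge_relint n C rho phi k =
     open_segment (poly_vertex n C rho phi (k mod n)) (poly_vertex n C rho phi (Suc k mod n))"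

definition supporting_polygon :: "complex set \<Rightarrow> complex \<Rightarrow> real \<Rightarrow> real \<Rightarrow> bool" where
  "supporting_polygon S C rho phi \<longleftrightarrow> rho > 0 \<and> card S \<ge> 3 \<and>
     (\<forall>k < card S.
        (card (S \<inter> poly_edge (card S) C rho phi k) = 2 \<and>
         S \<inter> poly_edge_relint (card S) C rho phi (Suc k) = {}) \<or>
        (card (S \<inter> poly_edge (card S) C rho phi (Suc k)) = 2 \<and>
         S \<inter> poly_edge_relint (card S) C rho phi k = {}))"

definition pre_regular :: "complex set \<Rightarrow> bool" where
  "pre_regular S \<longleftrightarrow> (\<exists>C rho phi. supporting_polygon S C rho phi)"

text \<open>Counterclockwise angle in [0, 2 pi) from the ray x->a to the ray x->b.\<close>
definition ccw_angle :: "complex \<Rightarrow> complex \<Rightarrow> complex \<Rightarrow> real" where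
  "ccw_angle x a b = (let t = Arg ((b - x) / (a - x)) in if t < 0 then t + 2 * pi else t)"

definition cyc_before :: "complex \<Rightarrow> complex \<Rightarrow> complex \<Rightarrow> complex \<Rightarrow> bool" where
  "cyc_before x a b c \<longleftrightarrow> ccw_angle x a b < ccw_angle x a c"

end

theory Submission
  imports Defs
begin

(* Idea.  Both O and C are "interior viewpoints" of S in the following sense: the point x is not
   in S, no point of S lies strictly between x and another point of S, and every p in S has a
   supporting line through p leaving S and x on one side.  For such a viewpoint x and three points
   a, b, c of S, the counterclockwise order of a, b, c seen from x is just the orientation of the
   triangle abc (theorem cyc_before_iff_orient).  Since the right-hand side does not mention x,
   the two cyclic orders agree. *)

definition orient :: "complex \<Rightarrow> complex \<Rightarrow> complex \<Rightarrow> real" where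
  "orient x a b = Im (cnj (a - x) * (b - x))"

lemma orient_degenerate [simp]: "orient x x b = 0" "orient x a x = 0" "orient x a a = 0"
  by (simp_all add: orient_def algebra_simps)

lemma orient_cycle: "orient a b c = orient b c a"
  by (simp add: orient_def algebra_simps)

lemma orient_swap: "orient a b c = - orient a c b"
  by (simp add: orient_def algebra_simps)

lemma orient_affine:
  "orient ((1 - t) *\<^sub>R p + t *\<^sub>R q) a b = (1 - t) * orient p a b + t * orient q a b"
  by (simp add: orient_def scaleR_conv_of_real algebra_simps)

lemma orient_eq_0_collinear:
  assumes "orient a b c = 0"
  shows "collinear {a, b, c}"
proof (cases "a = b")
  case True
  then show ?thesis by (simp add: collinear_2)
next
  case False
  define A B where "A = b - a" and "B = c - a"
  have A0: "A \<noteq> 0" using False by (simp add: A_def)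
  have im0: "Im (cnj A * B) = 0" using assms by (simp add: orient_def A_def B_def)
  have "B = (cnj A * B) * A / (cnj A * A)" using A0 by (simp add: field_simps)
  also have "\<dots> = of_real (Re (cnj A * B) / (cmod A)^2) * A"
    using im0 by (simp add: complex_eq_iff complex_norm_square[symmetric] mult.commute)
  finally have "B = (Re (cnj A * B) / (cmod A)^2) *\<^sub>R A" by (simp add: scaleR_conv_of_real)
  then have "collinear {0, A, B}" by (auto simp: collinear_lemma)
  moreover have "{a, b, c} = {b, a, c}" by auto
  ultimately show ?thesis using collinear_3[of b a c] by (simp add: A_def B_def)
qed

lemma collinear_distinct_between:
  fixes a b c :: "'a :: euclidean_space"
  assumes "collinear {a, b, c}" "a \<noteq> b" "b \<noteq> c" "a \<noteq> c"
  shows "a \<in> open_segment b c \<or> b \<in> open_segment c a \<or> c \<in> open_segment a b"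
  using assms collinear_between_cases[of a b c] by (auto simp: between_mem_segment open_segment_def)

lemma orient_zero_in_segment:
  assumes "orient x a b = 0" "x \<noteq> a" "x \<noteq> b" "a \<noteq> b"
    and "a \<notin> open_segment x b" "b \<notin> open_segment x a"
  shows "x \<in> open_segment a b"
  using collinear_distinct_between[OF orient_eq_0_collinear[OF assms(1)] assms(2,4,3)] assms(5,6)
  by (auto simp: open_segment_commute)

lemma orient_in_segment:
  assumes "x \<in> open_segment a b" "0 < orient a b c"
  shows "0 < orient x b c \<and> 0 < orient x c a"
proof -
  obtain t where t: "0 < t" "t < 1" "x = (1 - t) *\<^sub>R a + t *\<^sub>R b"
    using assms(1) by (auto simp: in_segment)
  have "orient x b c = (1 - t) * orient a b c"
    using orient_affine[of t a b b c] by (simp add: t(3))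
  moreover have "orient x c a = t * orient b c a"
    using orient_affine[of t a b c a] by (simp add: t(3))
  moreover have "0 < orient b c a" using assms(2) orient_cycle[of a b c] by linarith
  ultimately show ?thesis
    using t assms(2) mult_pos_pos[of "1 - t" "orient a b c"] mult_pos_pos[of t "orient b c a"]
    by linarith
qed

definition arg2 :: "complex \<Rightarrow> real" where
  "arg2 z = (if Arg z < 0 then Arg z + 2 * pi else Arg z)"

lemma ccw_angle_arg2: "ccw_angle x a b = arg2 ((b - x) / (a - x))"
  by (simp add: ccw_angle_def arg2_def Let_def)

lemma arg2_range: "0 \<le> arg2 z \<and> arg2 z < 2 * pi"
  using Arg_bounded[of z] by (auto simp: arg2_def)

lemma rcis_arg2: "rcis (cmod z) (arg2 z) = z"
proof -
  have "rcis (cmod z) (Arg z + 2 * pi) = rcis (cmod z) (Arg z)"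
    by (simp add: rcis_def complex_eq_iff)
  then show ?thesis using rcis_cmod_Arg[of z] by (simp add: arg2_def)
qed

lemma Im_mult_cnj_arg2: "Im (w * cnj u) = cmod w * cmod u * sin (arg2 w - arg2 u)"
proof -
  have "w * cnj u = rcis (cmod w) (arg2 w) * cnj (rcis (cmod u) (arg2 u))"
    using rcis_arg2 by metis
  also have "\<dots> = rcis (cmod w * cmod u) (arg2 w - arg2 u)"
    by (simp add: rcis_def cis_cnj cis_mult[of "arg2 w" "- arg2 u"])
  finally show ?thesis by (simp add: Im_rcis)
qed

lemma Im_divide_cnj: "Im (b / a) = Im (cnj a * b) / (cmod a)^2"
  by (simp add: complex_div_cnj[of b a] mult.commute flip: of_real_power)

lemma sin_arg2_sign:
  assumes "z \<noteq> 0"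
  shows "0 < sin (arg2 z) \<longleftrightarrow> 0 < Im z" "sin (arg2 z) < 0 \<longleftrightarrow> Im z < 0"
  using Im_mult_cnj_arg2[of z 1] assms
  by (simp_all add: arg2_def zero_less_mult_iff mult_less_0_iff)

lemma angle_less_from_sines:
  fixes \<alpha> \<beta> :: real
  assumes "0 \<le> \<alpha>" "\<alpha> < 2 * pi" "0 \<le> \<beta>" "\<beta> < 2 * pi"
    and "(0 < sin \<alpha> \<and> 0 < sin (\<beta> - \<alpha>)) \<or> (0 < sin (\<beta> - \<alpha>) \<and> sin \<beta> < 0)
         \<or> (0 < sin \<alpha> \<and> sin \<beta> < 0)"
  shows "\<alpha> < \<beta>"
proof (rule ccontr)
  assume "\<not> \<alpha> < \<beta>"
  then have "\<alpha> - \<beta> < pi \<Longrightarrow> sin (\<beta> - \<alpha>) \<le> 0"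
    using sin_ge_zero[of "\<alpha> - \<beta>"] sin_minus[of "\<alpha> - \<beta>"] by simp
  moreover have "0 < sin \<alpha> \<Longrightarrow> \<alpha> < pi"
    using sin_ge_zero[of "\<alpha> - pi"] assms(1,2) by (smt (verit) sin_minus_pi)
  moreover have "sin \<beta> < 0 \<Longrightarrow> pi < \<beta>"
    using sin_ge_zero[of \<beta>] assms(3) by linarith
  ultimately show False using assms \<open>\<not> \<alpha> < \<beta>\<close> by auto
qed

lemma cyc_before_if_two_positive:
  assumes "(0 < orient x a b \<and> 0 < orient x b c) \<or> (0 < orient x b c \<and> 0 < orient x c a)
           \<or> (0 < orient x a b \<and> 0 < orient x c a)"
  shows "cyc_before x a b c"
proof -
  have ne: "a \<noteq> x" "b \<noteq> x" "c \<noteq> x"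
    using assms by (auto simp: orient_def)
  define u w where "u = (b - x) / (a - x)" and "w = (c - x) / (a - x)"
  define N where "N = (cmod (a - x))^2"
  have N: "0 < N" using ne by (simp add: N_def)
  have uw: "u \<noteq> 0" "w \<noteq> 0" using ne by (auto simp: u_def w_def)
  have "Im u = orient x a b / N"
    by (simp add: u_def N_def Im_divide_cnj orient_def)
  then have su: "0 < sin (arg2 u) \<longleftrightarrow> 0 < orient x a b"
    using sin_arg2_sign(1)[OF uw(1)] N by (simp add: zero_less_divide_iff)
  have "Im w = - orient x c a / N"
    by (simp add: w_def N_def Im_divide_cnj orient_def algebra_simps)
  then have sw: "sin (arg2 w) < 0 \<longleftrightarrow> 0 < orient x c a"
    using sin_arg2_sign(2)[OF uw(2)] N by (simp add: zero_less_divide_iff)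
  have "(a - x) * cnj (a - x) = of_real N"
    by (simp only: N_def complex_norm_square)
  then have "w * cnj u = (c - x) * cnj (b - x) / of_real N"
    by (simp add: u_def w_def times_divide_times_eq mult.commute)
  then have "Im (w * cnj u) = orient x b c / N"
    by (simp add: Im_divide_of_real orient_def mult.commute)
  then have "orient x b c / N = (cmod w * cmod u) * sin (arg2 w - arg2 u)"
    by (metis Im_mult_cnj_arg2)
  moreover have "0 < cmod w * cmod u" using uw by simp
  ultimately have swu: "0 < sin (arg2 w - arg2 u) \<longleftrightarrow> 0 < orient x b c"
    using N by (metis zero_less_divide_iff zero_less_mult_iff order_less_asym)
  have "arg2 u < arg2 w"
    using angle_less_from_sines arg2_range[of u] arg2_range[of w] su sw swu assms by meson
  then show ?thesis by (simp add: cyc_before_def ccw_angle_arg2 u_def w_def)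
qed

definition slack :: "real \<Rightarrow> complex \<Rightarrow> complex \<Rightarrow> real" where
  "slack \<beta> w z = \<beta> - Re (z * cnj w)"

lemma slack_convex_comb:
  "slack \<beta> w ((1 - u) *\<^sub>R p + u *\<^sub>R q) = (1 - u) * slack \<beta> w p + u * slack \<beta> w q"
  by (simp add: slack_def scaleR_conv_of_real algebra_simps)

lemma slack_open_segment_zero:
  assumes "z \<in> open_segment p q" "slack \<beta> w z = 0" "0 \<le> slack \<beta> w p" "0 \<le> slack \<beta> w q"
  shows "slack \<beta> w p = 0 \<and> slack \<beta> w q = 0"
proof -
  obtain u where u: "0 < u" "u < 1" "z = (1 - u) *\<^sub>R p + u *\<^sub>R q"
    using assms(1) by (auto simp: in_segment)
  have "(1 - u) * slack \<beta> w p + u * slack \<beta> w q = 0"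
    using assms(2) by (simp add: u(3) slack_convex_comb)
  moreover have "0 \<le> (1 - u) * slack \<beta> w p" "0 \<le> u * slack \<beta> w q"
    using u assms(3,4) by simp_all
  ultimately show ?thesis using u by (simp add: add_nonneg_eq_0_iff)
qed

lemma slack_sum:
  assumes "finite S" "sum l S = 1"
  shows "slack \<beta> w (\<Sum>s\<in>S. l s *\<^sub>R s) = (\<Sum>s\<in>S. l s * slack \<beta> w s)"
proof -
  have "(\<Sum>s\<in>S. l s * slack \<beta> w s) = (\<Sum>s\<in>S. l s * \<beta>) - (\<Sum>s\<in>S. l s * Re (s * cnj w))"
    by (simp add: slack_def right_diff_distrib sum_subtractf)
  also have "(\<Sum>s\<in>S. l s * \<beta>) = \<beta>" using assms(2) by (simp add: sum_distrib_right[symmetric])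
  also have "(\<Sum>s\<in>S. l s * Re (s * cnj w)) = Re ((\<Sum>s\<in>S. l s *\<^sub>R s) * cnj w)"
    by (simp add: sum_distrib_right Re_sum scaleR_conv_of_real distrib_left mult.assoc)
  finally show ?thesis by (simp add: slack_def)
qed

lemma slack_convex_hull:
  assumes fin: "finite S" and x: "x \<in> convex hull S" and nonneg: "\<forall>s\<in>S. 0 \<le> slack \<beta> w s"
  shows "0 \<le> slack \<beta> w x"
    and "slack \<beta> w x = 0 \<Longrightarrow> x \<in> convex hull {s \<in> S. slack \<beta> w s = 0}"
proof -
  obtain l where l: "\<forall>s\<in>S. 0 \<le> l s" "sum l S = 1" "(\<Sum>s\<in>S. l s *\<^sub>R s) = x"
    using x unfolding convex_hull_finite[OF fin] by blast
  have x_slack: "slack \<beta> w x = (\<Sum>s\<in>S. l s * slack \<beta> w s)"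
    using slack_sum[OF fin l(2)] l(3) by simp
  then show "0 \<le> slack \<beta> w x" using l(1) nonneg by (simp add: sum_nonneg)
  assume "slack \<beta> w x = 0"
  then have "\<forall>s\<in>S. l s * slack \<beta> w s = 0"
    using x_slack l(1) nonneg fin by (subst sum_nonneg_eq_0_iff[symmetric]) auto
  then have outside: "l s = 0" if "s \<in> S - {s \<in> S. slack \<beta> w s = 0}" for s
    using that by auto
  let ?F = "{s \<in> S. slack \<beta> w s = 0}"
  have "sum l S = sum l ?F" "(\<Sum>s\<in>S. l s *\<^sub>R s) = (\<Sum>s\<in>?F. l s *\<^sub>R s)"
    by (rule sum.mono_neutral_right[OF fin]; use outside in auto)+
  then have "sum l ?F = 1" "(\<Sum>s\<in>?F. l s *\<^sub>R s) = x" using l(2,3) by simp_all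
  moreover have "finite ?F" using fin by simp
  ultimately show "x \<in> convex hull ?F"
    using l(1) unfolding convex_hull_finite[OF \<open>finite ?F\<close>] by auto
qed

lemma slack_orient_identity:
  assumes "slack \<beta> w b = 0"
  shows "orient a b c * slack \<beta> w x = orient x b c * slack \<beta> w a + orient x a b * slack \<beta> w c"
  using assms by (simp add: orient_def slack_def algebra_simps)

lemma orient_cone:
  assumes abc: "0 < orient a b c" and w: "w \<noteq> 0" and b: "slack \<beta> w b = 0"
    and nonneg: "0 \<le> slack \<beta> w a" "0 \<le> slack \<beta> w c" "0 \<le> slack \<beta> w x"
  shows "\<not> (orient x a b < 0 \<and> orient x b c < 0)"
proof
  assume neg: "orient x a b < 0 \<and> orient x b c < 0"
  have "0 \<le> orient a b c * slack \<beta> w x" using abc nonneg by simp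
  moreover have "orient x b c * slack \<beta> w a \<le> 0" "orient x a b * slack \<beta> w c \<le> 0"
    using neg nonneg by (auto simp: mult_nonpos_nonneg)
  ultimately have "orient x b c * slack \<beta> w a = 0" "orient x a b * slack \<beta> w c = 0"
    using slack_orient_identity[OF b, of a c x] by linarith+
  then have ac: "slack \<beta> w a = 0" "slack \<beta> w c = 0" using neg by auto
  have "orient a b c * slack \<beta> w (b + w) = 0"
    using slack_orient_identity[OF b, of a c "b + w"] ac by simp
  moreover have "slack \<beta> w (b + w) = - (cmod w * cmod w)"
    using b by (simp add: slack_def cmod_power2 algebra_simps power2_eq_square[symmetric])
  ultimately show False using abc w by simp
qed

definition supported_at :: "complex set \<Rightarrow> complex \<Rightarrow> bool" where
  "supported_at T p \<longleftrightarrow> (\<exists>\<beta> w. w \<noteq> 0 \<and> slack \<beta> w p = 0 \<and> (\<forall>z\<in>T. 0 \<le> slack \<beta> w z))"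

lemma supported_at_mono: "supported_at T p \<Longrightarrow> T' \<subseteq> T \<Longrightarrow> supported_at T' p"
  unfolding supported_at_def by blast

lemma two_positive_orientations:
  assumes abc: "0 < orient a b c" and x: "x \<notin> {a, b, c}"
    and not_between: "\<forall>p\<in>{a, b, c}. \<forall>q\<in>{a, b, c}. p \<notin> open_segment x q"
    and support: "\<forall>p\<in>{a, b, c}. supported_at {a, b, c, x} p"
  shows "(0 < orient x a b \<and> 0 < orient x b c) \<or> (0 < orient x b c \<and> 0 < orient x c a)
         \<or> (0 < orient x a b \<and> 0 < orient x c a)"
proof -
  have rot: "0 < orient b c a" "0 < orient c a b"
    using abc orient_cycle[of a b c] orient_cycle[of b c a] by linarith+
  have distinct: "a \<noteq> b" "b \<noteq> c" "a \<noteq> c" using abc by auto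
  show ?thesis
  proof (cases "orient x a b = 0 \<or> orient x b c = 0 \<or> orient x c a = 0")
    case True
    then have "x \<in> open_segment a b \<or> x \<in> open_segment b c \<or> x \<in> open_segment c a"
      using orient_zero_in_segment[of x a b] orient_zero_in_segment[of x b c]
        orient_zero_in_segment[of x c a] x not_between distinct by auto
    then show ?thesis
      using orient_in_segment[OF _ abc] orient_in_segment[OF _ rot(1)]
        orient_in_segment[OF _ rot(2)] by blast
  next
    case False
    have "\<not> (orient x a b < 0 \<and> orient x b c < 0)"
      using support orient_cone[OF abc] unfolding supported_at_def by blast
    moreover have "\<not> (orient x b c < 0 \<and> orient x c a < 0)"
      using support orient_cone[OF rot(1)] unfolding supported_at_def by blast
    moreover have "\<not> (orient x c a < 0 \<and> orient x a b < 0)"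
      using support orient_cone[OF rot(2)] unfolding supported_at_def by blast
    ultimately show ?thesis using False by linarith
  qed
qed

lemma cyc_before_iff_orient:
  assumes x: "x \<notin> S"
    and not_between: "\<forall>p\<in>S. \<forall>q\<in>S. p \<notin> open_segment x q"
    and support: "\<forall>p\<in>S. supported_at (insert x S) p"
    and abc: "a \<in> S" "b \<in> S" "c \<in> S" "orient a b c \<noteq> 0"
  shows "cyc_before x a b c \<longleftrightarrow> 0 < orient a b c"
proof -
  have positive: "cyc_before x p q r"
    if "0 < orient p q r" "p \<in> S" "q \<in> S" "r \<in> S" for p q r
  proof -
    have "\<forall>s\<in>{p, q, r}. supported_at {p, q, r, x} s"
      using support that by (blast intro: supported_at_mono)
    then show ?thesis
      using two_positive_orientations[OF that(1)] cyc_before_if_two_positive x not_between that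
      by (metis insertE singletonD)
  qed
  show ?thesis
  proof (cases "0 < orient a b c")
    case False
    then have "0 < orient a c b" using abc(4) orient_swap[of a b c] by linarith
    then have "cyc_before x a c b" using positive abc by blast
    then show ?thesis using False by (simp add: cyc_before_def)
  qed (use positive abc in blast)
qed

lemma closest_point_closer:
  fixes K :: "'a :: euclidean_space set"
  assumes "convex K" "closed K" "z \<notin> K" "y \<in> K"
  shows "dist (closest_point K z) y < dist z y"
proof -
  define p where "p = closest_point K z"
  have "p \<in> K" using assms closest_point_in_set[of K z] by (auto simp: p_def)
  then have "0 < (dist z p)^2" using assms(3) by auto
  moreover have "inner (z - p) (y - p) \<le> 0"
    unfolding p_def by (rule closest_point_dot[OF assms(1,2,4)])
  moreover have "(dist z y)^2 = (dist p y)^2 + (dist z p)^2 - 2 * inner (z - p) (y - p)"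
    unfolding dist_norm power2_norm_eq_inner
    by (simp add: inner_diff_left inner_diff_right inner_commute algebra_simps)
  ultimately have "(dist p y)^2 < (dist z y)^2" by linarith
  then show ?thesis unfolding p_def by (simp add: power2_less_imp_less)
qed

(* Hence the centre of the smallest enclosing disk of a finite set lies in its convex hull:
   otherwise the nearest hull point would be the centre of a smaller enclosing disk. *)
lemma sed_center_in_hull:
  assumes fin: "finite S" and nonempty: "S \<noteq> {}" and sed: "is_SED S z r"
  shows "z \<in> convex hull S"
proof (rule ccontr)
  assume outside: "z \<notin> convex hull S"
  define K where "K = convex hull S"
  have K: "convex K" "closed K" "S \<subseteq> K"
    using compact_imp_closed[OF finite_imp_compact_convex_hull[OF fin]]
    by (auto simp: K_def hull_subset)
  define p r' where "p = closest_point K z" and "r' = Max (dist p ` S)"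
  have "dist p s < r" if "s \<in> S" for s
    using closest_point_closer[OF K(1,2), of z s] outside that K(3) sed
    unfolding p_def K_def is_SED_def by fastforce
  then have "r' < r" unfolding r'_def using fin nonempty by simp
  moreover have "S \<subseteq> cball p r'" unfolding r'_def using fin by (auto simp: subset_iff)
  ultimately show False using sed unfolding is_SED_def by force
qed

lemma cos_add_int_2pi: "cos (x + 2 * pi * of_int q) = cos x"
  by (simp add: cos_add)

lemma cis_add_int_2pi: "cis (x + 2 * pi * of_int q) = cis x"
  by (simp add: cis.ctr cos_add sin_add)

(* Among the odd multiples of pi / n, only +-pi / n (modulo 2 pi) attain the largest cosine; this
   is why every vertex of a regular n-gon lies in the half-plane of every edge, and on its line
   only if it is an endpoint of that edge. *)
lemma cos_odd_multiple_less:
  fixes n :: nat and m :: int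
  assumes n: "3 \<le> n" and m: "2 \<le> m" "m < int n"
  shows "cos (pi * (2 * of_int m - 1) / n) < cos (pi / n)"
proof -
  define y where "y = pi * (2 * of_int m - 1) / n"
  have n_pos: "0 < real n" using n by simp
  have pi_n: "0 < pi / n" "pi / n < 3 * pi / n"
    using n_pos by (simp_all add: divide_strict_right_mono)
  have "pi * 3 \<le> pi * (2 * of_int m - 1)" using m by simp
  then have lower: "3 * pi / n \<le> y"
    unfolding y_def using n_pos by (simp add: divide_right_mono mult.commute)
  have "pi * (2 * of_int m - 1) \<le> pi * (2 * real n - 3)" using m by simp
  then have "y \<le> pi * (2 * real n - 3) / n"
    unfolding y_def using n_pos by (simp add: divide_right_mono)
  also have "\<dots> = 2 * pi - 3 * pi / n" using n_pos by (simp add: field_simps)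
  finally have upper: "y \<le> 2 * pi - 3 * pi / n" .
  show ?thesis
  proof (cases "y \<le> pi")
    case True
    then show ?thesis using cos_monotone_0_pi[of "pi / n" y] pi_n lower by (simp add: y_def)
  next
    case False
    have "cos y = cos (2 * pi - y)" by simp
    also have "\<dots> < cos (pi / n)"
      using cos_monotone_0_pi[of "pi / n" "2 * pi - y"] pi_n upper False by linarith
    finally show ?thesis by (simp add: y_def)
  qed
qed

lemma cos_odd_multiple:
  fixes n :: nat and d :: int
  assumes n: "3 \<le> n"
  shows "cos (pi * (2 * of_int d - 1) / n) \<le> cos (pi / n)"
    and "cos (pi * (2 * of_int d - 1) / n) = cos (pi / n) \<Longrightarrow> d mod n = 0 \<or> d mod n = 1"
proof -
  define m q where "m = d mod int n" and "q = d div int n"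
  have m: "0 \<le> m" "m < int n" using n by (auto simp: m_def)
  have "d = m + int n * q" by (simp add: m_def q_def)
  then have "pi * (2 * of_int d - 1) / n = pi * (2 * of_int m - 1) / n + 2 * pi * of_int q"
    using n by (simp add: field_simps)
  then have reduce: "cos (pi * (2 * of_int d - 1) / n) = cos (pi * (2 * of_int m - 1) / n)"
    by (simp add: cos_add_int_2pi)
  consider "m = 0" | "m = 1" | "2 \<le> m" using m by linarith
  then have "cos (pi * (2 * of_int m - 1) / n) \<le> cos (pi / n)
      \<and> (cos (pi * (2 * of_int m - 1) / n) = cos (pi / n) \<longrightarrow> m = 0 \<or> m = 1)"
    by cases
      (use cos_odd_multiple_less[OF n, of m] m in \<open>auto simp: minus_divide_left[symmetric]\<close>)
  then show "cos (pi * (2 * of_int d - 1) / n) \<le> cos (pi / n)"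
    and "cos (pi * (2 * of_int d - 1) / n) = cos (pi / n) \<Longrightarrow> d mod n = 0 \<or> d mod n = 1"
    using reduce by (simp_all add: m_def)
qed

(* Edge k joins vertex k to
   vertex k + 1; its outer normal is the unit vector normal k, its distance to the centre is the
   apothem, and edge_slack k is the slack with respect to the half-plane bounded by its line. *)
locale regular_polygon =
  fixes n :: nat and C :: complex and \<rho> \<phi> :: real
  assumes n3: "3 \<le> n" and rho_pos: "0 < \<rho>"
begin

definition vertex :: "nat \<Rightarrow> complex" where
  "vertex k = poly_vertex n C \<rho> \<phi> k"

definition normal :: "nat \<Rightarrow> complex" where
  "normal k = cis (\<phi> + 2 * pi * real k / real n + pi / real n)"

definition apothem :: real where
  "apothem = \<rho> * cos (pi / real n)"

definition edge_slack :: "nat \<Rightarrow> complex \<Rightarrow> real" where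
  "edge_slack k = slack (apothem + Re (C * cnj (normal k))) (normal k)"

definition edge :: "nat \<Rightarrow> complex set" where
  "edge k = closed_segment (vertex k) (vertex (Suc k))"

definition relint :: "nat \<Rightarrow> complex set" where
  "relint k = open_segment (vertex k) (vertex (Suc k))"

lemma n_pos: "0 < real n"
  using n3 by simp

lemma normal_nonzero: "normal k \<noteq> 0"
  by (simp add: normal_def)

lemma edge_slack_eq: "edge_slack k z = apothem - Re ((z - C) * cnj (normal k))"
  by (simp add: edge_slack_def slack_def algebra_simps)

lemma apothem_pos: "0 < apothem"
proof -
  have "pi / real n < pi / 2" using n3 by (simp add: field_simps)
  moreover have "- (pi / 2) < pi / real n" using n_pos by (smt (verit) divide_pos_pos pi_gt_zero)
  ultimately show ?thesis using cos_gt_zero_pi rho_pos by (simp add: apothem_def)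
qed

lemma edge_slack_center: "edge_slack k C = apothem"
  by (simp add: edge_slack_eq)

lemma edge_slack_vertex:
  "edge_slack k (vertex j) = apothem - \<rho> * cos (pi * (2 * of_int (int j - int k) - 1) / n)"
proof -
  have "\<phi> + 2 * pi * real j / n + - (\<phi> + 2 * pi * real k / n + pi / n)
      = pi * (2 * of_int (int j - int k) - 1) / n"
    using n_pos by (simp add: field_simps)
  then have "(vertex j - C) * cnj (normal k)
      = of_real \<rho> * cis (pi * (2 * of_int (int j - int k) - 1) / n)"
    by (simp add: vertex_def poly_vertex_def normal_def cis_cnj cis_mult)
  then show ?thesis by (simp add: edge_slack_eq)
qed

lemma vertex_slack_nonneg: "0 \<le> edge_slack k (vertex j)"
  using cos_odd_multiple(1)[OF n3, of "int j - int k"] rho_pos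
  by (simp add: edge_slack_vertex apothem_def)

lemma vertex_slack_zero_mod:
  "edge_slack k (vertex j) = 0 \<Longrightarrow> (int j - int k) mod n = 0 \<or> (int j - int k) mod n = 1"
  using cos_odd_multiple(2)[OF n3, of "int j - int k"] rho_pos
  by (simp add: edge_slack_vertex apothem_def)

lemma edge_slack_endpoints: "edge_slack k (vertex k) = 0" "edge_slack k (vertex (Suc k)) = 0"
  by (simp_all add: edge_slack_vertex apothem_def minus_divide_left[symmetric])

lemma vertex_cong:
  assumes "int j mod n = int k mod n"
  shows "vertex j = vertex k"
proof -
  obtain q where "int j - int k = int n * q"
    using assms by (metis dvd_def mod_eq_dvd_iff)
  then have "real j = real k + real n * of_int q"
    by (metis add.commute diff_add_cancel of_int_add of_int_mult of_int_of_nat_eq)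
  then have "\<phi> + 2 * pi * real j / n = \<phi> + 2 * pi * real k / n + 2 * pi * of_int q"
    using n_pos by (simp add: field_simps)
  then show ?thesis
    using cis_add_int_2pi[of "\<phi> + 2 * pi * real k / n" q]
    by (simp add: vertex_def poly_vertex_def add.assoc)
qed

lemma vertex_mod: "vertex (k mod n) = vertex k"
  by (rule vertex_cong) (simp add: zmod_int)

lemma vertex_Suc_mod: "vertex (Suc (k mod n)) = vertex (Suc k)"
  by (metis mod_Suc_eq vertex_mod)

lemma vertex_slack_zero:
  assumes "edge_slack k (vertex j) = 0"
  shows "vertex j = vertex k \<or> vertex j = vertex (Suc k)"
  using vertex_slack_zero_mod[OF assms]
proof
  assume "(int j - int k) mod n = 0"
  then have "int j mod n = int k mod n" by (simp add: mod_eq_dvd_iff dvd_eq_mod_eq_0)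
  then show ?thesis using vertex_cong by blast
next
  assume "(int j - int k) mod n = 1"
  then have "(int j - int k) mod int n = 1 mod int n" using n3 by simp
  then have "int n dvd (int j - int k - 1)" by (simp only: mod_eq_dvd_iff)
  then have "int j mod n = int (Suc k) mod n" by (simp add: mod_eq_dvd_iff algebra_simps)
  then show ?thesis using vertex_cong by blast
qed

lemma vertex_neq_Suc: "vertex k \<noteq> vertex (Suc k)"
proof
  assume "vertex k = vertex (Suc k)"
  then have "edge_slack (Suc k) (vertex k) = 0" using edge_slack_endpoints(1)[of "Suc k"] by simp
  then have "(int k - int (Suc k)) mod n = 0 \<or> (int k - int (Suc k)) mod n = 1"
    by (rule vertex_slack_zero_mod)
  moreover have "(int k - int (Suc k)) mod n = int n - 1" using n3 by (simp add: zmod_minus1)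
  ultimately show False using n3 by auto
qed

lemma vertex_inj:
  assumes "j < n" "k < n" "vertex j = vertex k"
  shows "j = k"
proof -
  have "j = k" if jk: "j < n" "vertex j = vertex k" "k \<le> j" for j k
  proof -
    have "edge_slack k (vertex j) = 0" using jk edge_slack_endpoints(1)[of k] by simp
    moreover have "(int j - int k) mod n = int (j - k)" using jk by (simp add: of_nat_diff)
    ultimately have "j = k \<or> j = Suc k" using vertex_slack_zero_mod[of k j] jk(3) by auto
    then show ?thesis using vertex_neq_Suc[of k] jk(2) by auto
  qed
  then show ?thesis using assms by (metis nat_le_linear)
qed

lemma poly_edge_eq: "poly_edge n C \<rho> \<phi> k = edge k"
  unfolding poly_edge_def edge_def using vertex_mod[of k] vertex_mod[of "Suc k"]
  by (simp add: vertex_def)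

lemma poly_edge_relint_eq: "poly_edge_relint n C \<rho> \<phi> k = relint k"
  unfolding poly_edge_relint_def relint_def using vertex_mod[of k] vertex_mod[of "Suc k"]
  by (simp add: vertex_def)

lemma edge_mod: "edge (k mod n) = edge k"
  by (simp add: edge_def vertex_mod vertex_Suc_mod)

lemma relint_mod: "relint (k mod n) = relint k"
  by (simp add: relint_def vertex_mod vertex_Suc_mod)

lemma edge_Suc_mod: "edge (Suc (k mod n)) = edge (Suc k)"
  by (metis edge_mod mod_Suc_eq)

lemma relint_Suc_mod: "relint (Suc (k mod n)) = relint (Suc k)"
  by (metis relint_mod mod_Suc_eq)

lemma edge_split: "edge k = {vertex k} \<union> {vertex (Suc k)} \<union> relint k"
  unfolding edge_def relint_def open_segment_def by auto

lemma relint_subset_edge: "relint k \<subseteq> edge k"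
  using edge_split by blast

lemma slack_on_edge:
  assumes "z \<in> edge k"
  shows "edge_slack k z = 0" "0 \<le> edge_slack j z"
proof -
  obtain u where u: "0 \<le> u" "u \<le> 1" "z = (1 - u) *\<^sub>R vertex k + u *\<^sub>R vertex (Suc k)"
    using assms unfolding edge_def in_segment by blast
  have slack_z:
    "edge_slack i z = (1 - u) * edge_slack i (vertex k) + u * edge_slack i (vertex (Suc k))" for i
    unfolding u(3) edge_slack_def slack_convex_comb by simp
  show "edge_slack k z = 0"
    using slack_z[of k] edge_slack_endpoints by simp
  show "0 \<le> edge_slack j z"
    using slack_z[of j] vertex_slack_nonneg[of j k] vertex_slack_nonneg[of j "Suc k"] u by simp
qed

lemma relint_slack_zero:
  assumes "z \<in> relint k" "edge_slack j z = 0"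
  shows "(int k - int j) mod n = 0"
proof (rule ccontr)
  assume nonzero: "(int k - int j) mod n \<noteq> 0"
  have "edge_slack j (vertex k) = 0 \<and> edge_slack j (vertex (Suc k)) = 0"
    using slack_open_segment_zero[of z "vertex k" "vertex (Suc k)"] assms vertex_slack_nonneg
    unfolding relint_def edge_slack_def by blast
  then have "(int k - int j) mod n = 1"
    and "(int (Suc k) - int j) mod n = 0 \<or> (int (Suc k) - int j) mod n = 1"
    using vertex_slack_zero_mod nonzero by blast+
  moreover have "(int (Suc k) - int j) mod n = ((int k - int j) mod n + 1) mod n"
    by (simp only: mod_add_left_eq) (simp add: algebra_simps)
  ultimately show False using n3 by simp
qed

lemma relint_disjoint:
  assumes "j < n" "k < n" "j \<noteq> k"
  shows "relint j \<inter> relint k = {}"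
proof -
  have False if z: "z \<in> relint j" "z \<in> relint k" for z
  proof -
    have "edge_slack j z = 0" using z(1) relint_subset_edge slack_on_edge by blast
    then have "(int k - int j) mod n = 0" by (rule relint_slack_zero[OF z(2)])
    then have "int k mod n = int j mod n" by (simp add: mod_eq_dvd_iff dvd_eq_mod_eq_0)
    then show False using assms by (simp add: zmod_int)
  qed
  then show ?thesis by blast
qed

lemma vertex_notin_relint: "vertex j \<notin> relint k"
proof
  assume v: "vertex j \<in> relint k"
  then have "edge_slack k (vertex j) = 0" using relint_subset_edge slack_on_edge by blast
  then show False using vertex_slack_zero v by (auto simp: relint_def open_segment_def)
qed

lemma edge_of_slack_zero:
  assumes "z \<in> edge j" "edge_slack k z = 0"
  shows "z \<in> edge k"
proof -
  have vertex_in: "vertex i \<in> edge k" if "edge_slack k (vertex i) = 0" for i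
    using vertex_slack_zero[OF that] by (auto simp: edge_def)
  consider "z = vertex j" | "z = vertex (Suc j)" | "z \<in> relint j"
    using assms(1) edge_split by blast
  then show ?thesis
  proof cases
    case 3
    then have "edge_slack k (vertex j) = 0 \<and> edge_slack k (vertex (Suc j)) = 0"
      using slack_open_segment_zero[of z "vertex j" "vertex (Suc j)"] assms(2) vertex_slack_nonneg
      unfolding relint_def edge_slack_def by blast
    then have "edge j \<subseteq> edge k"
      using vertex_in unfolding edge_def by (metis closed_segment_subset convex_closed_segment)
    then show ?thesis using assms(1) by blast
  qed (use assms vertex_in in auto)
qed

lemma card_edge:
  assumes "finite S"
  shows "card (S \<inter> edge k)
         = card (S \<inter> {vertex k}) + card (S \<inter> {vertex (Suc k)}) + card (S \<inter> relint k)"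
proof -
  have "S \<inter> edge k = ((S \<inter> {vertex k}) \<union> (S \<inter> {vertex (Suc k)})) \<union> (S \<inter> relint k)"
    using edge_split by auto
  moreover have "((S \<inter> {vertex k}) \<union> (S \<inter> {vertex (Suc k)})) \<inter> (S \<inter> relint k) = {}"
    using vertex_notin_relint by auto
  moreover have "(S \<inter> {vertex k}) \<inter> (S \<inter> {vertex (Suc k)}) = {}"
    using vertex_neq_Suc by auto
  ultimately show ?thesis using assms by (simp add: card_Un_disjoint)
qed

end

lemma sum_shift_periodic:
  fixes f :: "nat \<Rightarrow> nat"
  assumes "\<And>k. f (k mod n) = f k" "0 < n"
  shows "(\<Sum>k<n. f (Suc k)) = (\<Sum>k<n. f k)"
proof -
  have "(\<Sum>k<Suc n. f k) = f 0 + (\<Sum>k<n. f (Suc k))" by (rule sum.lessThan_Suc_shift)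
  moreover have "(\<Sum>k<Suc n. f k) = (\<Sum>k<n. f k) + f n" by simp
  moreover have "f n = f 0" using assms(1)[of n] by simp
  ultimately show ?thesis by simp
qed

lemma periodic_sum_lower_bound:
  fixes y :: "nat \<Rightarrow> nat"
  assumes n: "0 < n" and periodic: "\<And>k. y (k mod n) = y k"
    and refill: "\<And>k. y k = 0 \<Longrightarrow> 2 \<le> y (Suc k)"
  shows "n \<le> (\<Sum>k<n. y k)"
proof -
  have "(\<Sum>k<n. of_bool (0 < y k) + of_bool (y k = 0) :: nat) = (\<Sum>k<n. 1)"
    by (intro sum.cong) auto
  then have "n = (\<Sum>k<n. of_bool (0 < y k) + of_bool (y k = 0) :: nat)" by simp
  also have "\<dots> = (\<Sum>k<n. of_bool (0 < y (Suc k))) + (\<Sum>k<n. of_bool (y k = 0))"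
    using sum_shift_periodic[of "\<lambda>k. of_bool (0 < y k) :: nat", OF _ n] periodic
    by (simp add: sum.distrib)
  also have "\<dots> \<le> (\<Sum>k<n. y (Suc k))"
  proof -
    have "of_bool (0 < y (Suc k)) + of_bool (y k = 0) \<le> y (Suc k)" for k
      using refill[of k] by (cases "y k = 0") auto
    then show ?thesis unfolding sum.distrib[symmetric] by (intro sum_mono)
  qed
  also have "\<dots> = (\<Sum>k<n. y k)" using sum_shift_periodic[of y, OF periodic n] .
  finally show ?thesis .
qed

locale pre_regular_set =
  fixes S :: "complex set" and C :: complex and \<rho> \<phi> :: real
  assumes finite_S: "finite S" and supporting: "supporting_polygon S C \<rho> \<phi>"
begin

sublocale regular_polygon "card S" C \<rho> \<phi>
  using supporting by unfold_locales (auto simp: supporting_polygon_def)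

lemma supporting_any:
  "(card (S \<inter> edge k) = 2 \<and> S \<inter> relint (Suc k) = {})
   \<or> (card (S \<inter> edge (Suc k)) = 2 \<and> S \<inter> relint k = {})"
proof -
  have "\<forall>j<card S. (card (S \<inter> edge j) = 2 \<and> S \<inter> relint (Suc j) = {})
                    \<or> (card (S \<inter> edge (Suc j)) = 2 \<and> S \<inter> relint j = {})"
    using supporting unfolding supporting_polygon_def poly_edge_eq poly_edge_relint_eq by blast
  moreover have "k mod card S < card S" using n3 by simp
  ultimately show ?thesis
    by (metis edge_mod relint_mod edge_Suc_mod relint_Suc_mod)
qed

(* Counting: with x k the number of points of S at vertex k and r k the number in the relative
   interior of edge k, the sequence x (k + 1) + r k never has a zero followed by a value below 2,
   so the vertices and edge interiors carry at least n = |S| points. *)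
lemma boundary_count: "card S \<le> (\<Sum>k<card S. card (S \<inter> {vertex k}) + card (S \<inter> relint k))"
proof -
  define x r where "x k = card (S \<inter> {vertex k})" and "r k = card (S \<inter> relint k)" for k
  define y where "y k = x (Suc k) + r k" for k
  have n: "0 < card S" using n3 by simp
  have x_periodic: "x (k mod card S) = x k" for k by (simp add: x_def vertex_mod)
  have "y (k mod card S) = y k" for k by (simp add: y_def x_def r_def relint_mod vertex_Suc_mod)
  moreover have "2 \<le> y (Suc k)" if "y k = 0" for k
  proof -
    have "x k \<le> 1" using card_mono[of "{vertex k}" "S \<inter> {vertex k}"] by (simp add: x_def)
    then have "card (S \<inter> edge k) \<noteq> 2"
      using that card_edge[OF finite_S, of k] by (simp add: x_def r_def y_def)
    then have "card (S \<inter> edge (Suc k)) = 2" using supporting_any[of k] by blast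
    then show ?thesis
      using that card_edge[OF finite_S, of "Suc k"] by (simp add: x_def r_def y_def)
  qed
  ultimately have "card S \<le> (\<Sum>k<card S. y k)" by (rule periodic_sum_lower_bound[OF n])
  also have "\<dots> = (\<Sum>k<card S. x k + r k)"
    using sum_shift_periodic[of x, OF x_periodic n] by (simp add: y_def sum.distrib)
  finally show ?thesis by (simp add: x_def r_def)
qed

(* Since these pieces are disjoint, all of S lies on the boundary of the supporting polygon. *)
lemma points_on_boundary: "S \<subseteq> (\<Union>k<card S. edge k)"
proof -
  define W where "W k = (S \<inter> {vertex k}) \<union> (S \<inter> relint k)" for k
  have card_W: "card (W k) = card (S \<inter> {vertex k}) + card (S \<inter> relint k)" for k
    using vertex_notin_relint finite_S unfolding W_def by (subst card_Un_disjoint) auto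
  have "W i \<inter> W j = {}" if "i < card S" "j < card S" "i \<noteq> j" for i j
    using vertex_inj[OF that(1,2)] relint_disjoint[OF that] vertex_notin_relint that(3)
    unfolding W_def by auto
  then have "card (\<Union>k<card S. W k) = (\<Sum>k<card S. card (W k))"
    using finite_S by (intro card_UN_disjoint) (auto simp: W_def)
  then have "card S \<le> card (\<Union>k<card S. W k)"
    using boundary_count card_W by simp
  moreover have W_sub: "(\<Union>k<card S. W k) \<subseteq> S \<inter> (\<Union>k<card S. edge k)"
    using edge_split unfolding W_def by auto
  ultimately have "(\<Union>k<card S. W k) = S"
    using W_sub by (intro card_seteq[OF finite_S]) auto
  then show ?thesis using W_sub by blast
qed

lemma on_edge: "s \<in> S \<Longrightarrow> \<exists>k. s \<in> edge k"
  using points_on_boundary by blast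

lemma slack_nonneg: "s \<in> S \<Longrightarrow> 0 \<le> edge_slack j s"
  using on_edge slack_on_edge(2) by blast

(* Every edge carries at most two points of S: either it is a 2-point edge of the definition, or
   its relative interior is empty. *)
lemma edge_card_le_2: "card (S \<inter> edge k) \<le> 2"
proof -
  define j where "j = (k + card S - 1) mod card S"
  have n: "0 < card S" using n3 by simp
  have "Suc j mod card S = k mod card S"
    unfolding j_def using n by (metis Suc_diff_1 add_gr_0 mod_Suc_eq mod_add_self2)
  then have "edge (Suc j) = edge k" "relint (Suc j) = relint k"
    by (metis edge_mod, metis relint_mod)
  then consider "card (S \<inter> edge k) = 2" | "S \<inter> relint k = {}"
    using supporting_any[of j] by auto
  then show ?thesis
  proof cases
    case 2
    then have "S \<inter> edge k \<subseteq> {vertex k, vertex (Suc k)}" using edge_split by auto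
    then have "card (S \<inter> edge k) \<le> card {vertex k, vertex (Suc k)}"
      by (intro card_mono) auto
    also have "\<dots> \<le> 2" by (simp add: card_insert_if)
    finally show ?thesis .
  qed simp
qed

lemma edge_points:
  assumes "p \<in> S" "q \<in> S" "p \<noteq> q" "p \<in> edge k" "q \<in> edge k"
  shows "S \<inter> edge k = {p, q}"
proof -
  have "{p, q} \<subseteq> S \<inter> edge k" using assms by auto
  moreover have "card {p, q} = 2" using assms(3) by simp
  ultimately show ?thesis
    using edge_card_le_2[of k] finite_S by (metis card_seteq finite_Int)
qed

lemma no_point_between:
  assumes "p \<in> S" "q \<in> S" "m \<in> S"
  shows "m \<notin> open_segment p q"
proof
  assume m: "m \<in> open_segment p q"
  obtain k where k: "m \<in> edge k" using on_edge assms(3) by blast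
  have "edge_slack k p = 0 \<and> edge_slack k q = 0"
    using slack_open_segment_zero[OF m] slack_on_edge(1)[OF k] slack_nonneg assms
    unfolding edge_slack_def by blast
  then have "p \<in> edge k" "q \<in> edge k" using edge_of_slack_zero on_edge assms by blast+
  moreover have "p \<noteq> q" using m by (auto simp: open_segment_def)
  ultimately have "S \<inter> edge k = {p, q}" using edge_points assms(1,2) by blast
  then have "m \<in> {p, q}" using assms(3) k by blast
  then show False using m by (auto simp: open_segment_def)
qed

lemma orient_nonzero:
  assumes "a \<in> S" "b \<in> S" "c \<in> S" "a \<noteq> b" "b \<noteq> c" "a \<noteq> c"
  shows "orient a b c \<noteq> 0"
proof
  assume "orient a b c = 0"
  then have "collinear {a, b, c}" by (rule orient_eq_0_collinear)
  then show False
    using collinear_distinct_between[OF _ assms(4-6)] no_point_between assms(1-3) by blast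
qed

(* Edges through points of S give supporting lines for any x inside the polygon. *)
lemma supported_from_inside:
  assumes "\<forall>j. 0 \<le> edge_slack j x"
  shows "\<forall>p\<in>S. supported_at (insert x S) p"
proof
  fix p assume "p \<in> S"
  then obtain k where "p \<in> edge k" using on_edge by blast
  then show "supported_at (insert x S) p"
    unfolding supported_at_def
    using normal_nonzero slack_on_edge(1) slack_nonneg assms unfolding edge_slack_def by blast
qed

(* The polygon centre is an interior viewpoint of S: it is strictly inside every edge half-plane. *)
lemma center_position:
  shows "C \<notin> S" "\<forall>p\<in>S. \<forall>q\<in>S. p \<notin> open_segment C q" "\<forall>j. 0 \<le> edge_slack j C"
proof -
  have C: "0 < edge_slack j C" for j using apothem_pos by (simp add: edge_slack_center)
  then show "C \<notin> S" using on_edge slack_on_edge(1) by (metis less_irrefl)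
  show "\<forall>p\<in>S. \<forall>q\<in>S. p \<notin> open_segment C q"
  proof (intro ballI notI)
    fix p q assume pq: "p \<in> S" "q \<in> S" "p \<in> open_segment C q"
    obtain k where "p \<in> edge k" using on_edge pq(1) by blast
    then show False
      using slack_open_segment_zero[OF pq(3)] slack_on_edge(1) C[of k] slack_nonneg[OF pq(2)]
      unfolding edge_slack_def by force
  qed
  show "\<forall>j. 0 \<le> edge_slack j C" using C less_imp_le by blast
qed

(* So is every point of the convex hull of S outside S: if p were strictly between x and q, the line
   of the edge through p would contain x and q, hence x would lie on the segment pq spanned by
   the only two points of S on that edge, which is incompatible with p being between x and q. *)
lemma hull_point_position:
  assumes x: "x \<in> convex hull S" "x \<notin> S"
  shows "\<forall>p\<in>S. \<forall>q\<in>S. p \<notin> open_segment x q" "\<forall>j. 0 \<le> edge_slack j x"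
proof -
  have hull_slack: "0 \<le> edge_slack j x"
    and hull_face: "edge_slack j x = 0 \<Longrightarrow> x \<in> convex hull {s \<in> S. edge_slack j s = 0}" for j
    using slack_convex_hull[OF finite_S x(1)] slack_nonneg unfolding edge_slack_def by blast+
  then show "\<forall>j. 0 \<le> edge_slack j x" by blast
  show "\<forall>p\<in>S. \<forall>q\<in>S. p \<notin> open_segment x q"
  proof (intro ballI notI)
    fix p q assume pq: "p \<in> S" "q \<in> S" "p \<in> open_segment x q"
    obtain k where k: "p \<in> edge k" using on_edge pq(1) by blast
    have "edge_slack k x = 0 \<and> edge_slack k q = 0"
      using slack_open_segment_zero[OF pq(3)] slack_on_edge(1)[OF k] hull_slack slack_nonneg pq(2)
      unfolding edge_slack_def by blast
    then have "x \<in> convex hull {s \<in> S. edge_slack k s = 0}" "q \<in> edge k"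
      using hull_face edge_of_slack_zero on_edge pq(2) by blast+
    moreover have "{s \<in> S. edge_slack k s = 0} \<subseteq> S \<inter> edge k"
      using edge_of_slack_zero on_edge by blast
    moreover have "S \<inter> edge k = {p, q}"
      using edge_points pq k \<open>q \<in> edge k\<close> by (auto simp: open_segment_def)
    ultimately have "between (p, q) x"
      using hull_mono by (fastforce simp: between_mem_segment segment_convex_hull)
    moreover have "between (x, q) p"
      using pq(3) by (simp add: between_mem_segment open_closed_segment)
    ultimately show False
      using between_antisym[where a = x and b = p and c = q] x(2) pq(1) by blast
  qed
qed

theorem cyclic_orders_agree:
  assumes sed: "is_SED S z r" and z: "z \<notin> S"
  shows "\<forall>a\<in>S. \<forall>b\<in>S. \<forall>c\<in>S. a \<noteq> b \<and> b \<noteq> c \<and> a \<noteq> c \<longrightarrow>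
           (cyc_before z a b c \<longleftrightarrow> cyc_before C a b c)"
proof (intro ballI impI)
  fix a b c assume abc: "a \<in> S" "b \<in> S" "c \<in> S" "a \<noteq> b \<and> b \<noteq> c \<and> a \<noteq> c"
  have "S \<noteq> {}" using n3 by auto
  then have z_hull: "z \<in> convex hull S" using sed_center_in_hull[OF finite_S _ sed] by blast
  have orient: "orient a b c \<noteq> 0" using orient_nonzero abc by blast
  have "cyc_before z a b c \<longleftrightarrow> 0 < orient a b c"
    using cyc_before_iff_orient[OF z hull_point_position(1)[OF z_hull z]
        supported_from_inside[OF hull_point_position(2)[OF z_hull z]] abc(1-3) orient] .
  moreover have "cyc_before C a b c \<longleftrightarrow> 0 < orient a b c"
    using cyc_before_iff_orient[OF center_position(1,2)
        supported_from_inside[OF center_position(3)] abc(1-3) orient] .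
  ultimately show "cyc_before z a b c \<longleftrightarrow> cyc_before C a b c" by simp
qed

end

(* Lemma 5.9 (only |S| >= 3, contained in the definition of a supporting polygon, is needed). *)
theorem lemma5p9:
  fixes S :: "complex set" and O_S :: complex and r :: real
    and C :: complex and rho phi :: real
  assumes "finite S" and "card S > 4"
    and "is_SED S O_S r" and "O_S \<notin> S"
    and "supporting_polygon S C rho phi"
  shows "\<forall>a\<in>S. \<forall>b\<in>S. \<forall>c\<in>S. a \<noteq> b \<and> b \<noteq> c \<and> a \<noteq> c \<longrightarrow>
           (cyc_before O_S a b c \<longleftrightarrow> cyc_before C a b c)"
proof -
  interpret pre_regular_set S C rho phi
    using assms(1,5) by unfold_locales
  show ?thesis using cyclic_orders_agree[OF assms(3,4)] .
qed

end
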